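(* There exist symmetric pseudo-Boolean functions of $n$ variables for which any quadratization must involve at least $\Omega(\sqrt{n})$ auxiliary variables; that is, there is a constant $c>0$ such that for infinitely many $n$ there is a symmetric $f:\{0,1\}^n\to\mathbb{R}$ every quadratization of which uses at least $c\sqrt n$ auxiliary variables.
   Context: A pseudo-Boolean function is a map $\{0,1\}^n\to\mathbb{R}$; it is symmetric if its value depends only on the Hamming weight. A quadratization of $f$ using $m$ auxiliary variables is a polynomial $g(x,y)$ of degree at most $2$ in $x_1,\ldots,x_n,y_1,\ldots,y_m$ such that $f(x)=\min\{g(x,y):y\in\{0,1\}^m\}$ for all $x\in\{0,1\}^n$. *)

theory Defs
  imports Complex_Main
begin

text \<open>Boolean points of \<open>{0,1}^n\<close>: maps \<open>nat \<Rightarrow> bool\<close> that are False outside \<open>{0..<n}\<close>.\<close>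
definition bool_vecs :: "nat \<Rightarrow> (nat \<Rightarrow> bool) set" where
  "bool_vecs n = {x. \<forall>i\<ge>n. \<not> x i}"

definition hweight :: "nat \<Rightarrow> (nat \<Rightarrow> bool) \<Rightarrow> nat" where
  "hweight n x = card {i. i < n \<and> x i}"

definition symmetric_pbf :: "nat \<Rightarrow> ((nat \<Rightarrow> bool) \<Rightarrow> real) \<Rightarrow> bool" where
  "symmetric_pbf n f \<longleftrightarrow>
     (\<forall>x\<in>bool_vecs n. \<forall>y\<in>bool_vecs n. hweight n x = hweight n y \<longrightarrow> f x = f y)"

definition quad_poly :: "nat \<Rightarrow> real \<Rightarrow> (nat \<Rightarrow> real) \<Rightarrow> (nat \<Rightarrow> nat \<Rightarrow> real) \<Rightarrow> (nat \<Rightarrow> real) \<Rightarrow> real" where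
  "quad_poly N c a b z = c + (\<Sum>i<N. a i * z i) + (\<Sum>i<N. \<Sum>j<N. b i j * z i * z j)"

definition concat_vec :: "nat \<Rightarrow> (nat \<Rightarrow> bool) \<Rightarrow> (nat \<Rightarrow> bool) \<Rightarrow> nat \<Rightarrow> real" where
  "concat_vec n x y i = (if i < n then of_bool (x i) else of_bool (y (i - n)))"

definition has_quadratization :: "nat \<Rightarrow> nat \<Rightarrow> ((nat \<Rightarrow> bool) \<Rightarrow> real) \<Rightarrow> bool" where
  "has_quadratization n m f \<longleftrightarrow>
     (\<exists>c a b. \<forall>x\<in>bool_vecs n.
        f x = Min ((\<lambda>y. quad_poly (n + m) c a b (concat_vec n x y)) ` bool_vecs m))"

end

theory Submission
  imports Defs "HOL-Library.Discrete_Functions" "HOL-Library.Function_Algebras" "HOL-Library.FuncSet"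
begin

(* Take n = 2^k - 1 and split the n variables into blocks of sizes 1, 2, 4, ..., 2^(k-1).
   Switching on the blocks selected by z in {0,1}^k gives a "block point" of Hamming weight
   binary_value k z; these weights are pairwise distinct, so a symmetric f may take an
   ARBITRARY prescribed value phi(z) at the block point of z.  If g(x,y) quadratizes f with
   m auxiliary variables, choosing a minimizing y = sigma(z) for every z shows that phi is a
   linear combination of the at most (k+m+1)^2 products v_p v_q, where v ranges over
   z_0..z_(k-1), sigma(z)_0..sigma(z)_(m-1) and the constant 1.  If (k+m+1)^2 < 2^k each
   such span is a proper subspace of the 2^k-dimensional space of functions on {0,1}^k; as
   there are only finitely many pairs (m, sigma) and a vector space over an infinite field is
   not a finite union of proper subspaces, some phi avoids all of them.  The resulting f
   forces 2^k <= (k+m+1)^2, i.e. m >= sqrt(n)/2 once k >= 10. *)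

context vector_space
begin

lemma subspace_scale_cancel:
  assumes "subspace S" "c \<noteq> 0" "c *s x \<in> S"
  shows "x \<in> S"
proof -
  have "inverse c *s (c *s x) \<in> S" using assms(1,3) by (rule subspace_scale)
  moreover have "inverse c *s (c *s x) = x" using assms(2) by (simp add: scale_scale)
  ultimately show ?thesis by simp
qed

lemma line_meets_subspace_once:
  assumes S: "subspace S" and w: "w \<notin> S"
    and a: "w + a *s u \<in> S" and b: "w + b *s u \<in> S"
  shows "a = b"
proof (rule ccontr)
  assume ab: "a \<noteq> b"
  have "(w + a *s u) - (w + b *s u) = (a - b) *s u" by (simp add: scale_left_diff_distrib)
  then have "(a - b) *s u \<in> S" using subspace_diff[OF S a b] by simp
  then have "u \<in> S" using subspace_scale_cancel[OF S] ab by (meson right_minus_eq)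
  then have "(w + a *s u) - a *s u \<in> S" using S a by (blast intro: subspace_diff subspace_scale)
  then show False using w by simp
qed

(* Induction on the number of subspaces: if w avoids all of them but U_j, and u in W lies
   outside U_j, then among card I + 1 nonzero scalars l some w + l u avoids all of them. *)
lemma avoid_finite_union_of_subspaces:
  assumes inf: "infinite (UNIV :: 'a set)" and "finite I" and W: "subspace W"
    and "\<And>i. i \<in> I \<Longrightarrow> subspace (U i)" and "\<And>i. i \<in> I \<Longrightarrow> \<not> W \<subseteq> U i"
  shows "\<exists>w\<in>W. \<forall>i\<in>I. w \<notin> U i"
  using assms(2,4,5)
proof (induction I rule: finite_induct)
  case empty
  then show ?case using subspace_0[OF W] by blast
next
  case (insert j I)
  then obtain w where w: "w \<in> W" "\<forall>i\<in>I. w \<notin> U i" by auto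
  show ?case
  proof (cases "w \<in> U j")
    case False
    then show ?thesis using w by auto
  next
    case True
    from insert.prems(2)[of j] obtain u where u: "u \<in> W" "u \<notin> U j" by auto
    have "infinite (UNIV - {0} :: 'a set)" using inf by simp
    then obtain L :: "'a set" where L: "L \<subseteq> UNIV - {0}" "finite L" "card L = Suc (card I)"
      using infinite_arbitrarily_large by blast
    define Bad where "Bad i = {l \<in> L. w + l *s u \<in> U i}" for i
    have "card (Bad i) \<le> 1" if i: "i \<in> I" for i
    proof -
      have "w \<notin> U i" using w i by auto
      then have "\<forall>a\<in>Bad i. \<forall>b\<in>Bad i. a = b"
        using line_meets_subspace_once insert.prems(1) i unfolding Bad_def by blast
      then show ?thesis using L(2) unfolding Bad_def by (auto simp: card_le_Suc0_iff_eq)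
    qed
    then have "card (\<Union>i\<in>I. Bad i) \<le> card I"
      using card_UN_le[OF insert.hyps(1), of Bad] sum_mono[of I "\<lambda>i. card (Bad i)" "\<lambda>_. 1"]
      by simp
    then have "card (\<Union>i\<in>I. Bad i) < card L" using L(3) by simp
    moreover have "finite (\<Union>i\<in>I. Bad i)"
      by (rule finite_subset[OF _ L(2)]) (auto simp: Bad_def)
    ultimately have "\<not> L \<subseteq> (\<Union>i\<in>I. Bad i)" by (meson card_mono leD)
    then obtain l where l: "l \<in> L" "\<forall>i\<in>I. l \<notin> Bad i" by auto
    have "w + l *s u \<notin> U j"
    proof
      assume "w + l *s u \<in> U j"
      then have "(w + l *s u) - w \<in> U j"
        using True insert.prems(1) by (blast intro: subspace_diff)
      then have "l *s u \<in> U j" by simp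
      then show False using subspace_scale_cancel insert.prems(1) l(1) L(1) u(2) by blast
    qed
    moreover have "w + l *s u \<in> W" using W w u by (simp add: subspace_add subspace_scale)
    ultimately show ?thesis using l unfolding Bad_def by auto
  qed
qed

end

lemma bool_vecs_eq: "bool_vecs k = (\<lambda>S i. i \<in> S) ` Pow {..<k}"
proof -
  have "x \<in> (\<lambda>S i. i \<in> S) ` Pow {..<k}" if "x \<in> bool_vecs k" for x
  proof
    show "x = (\<lambda>i. i \<in> {i. i < k \<and> x i})"
      using that unfolding bool_vecs_def by (auto simp: fun_eq_iff) (meson not_le)
  qed auto
  then show ?thesis unfolding bool_vecs_def by auto
qed

lemma finite_bool_vecs: "finite (bool_vecs k)"
  by (simp add: bool_vecs_eq)

lemma card_bool_vecs: "card (bool_vecs k) = 2 ^ k"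
proof -
  have "inj_on (\<lambda>S i. i \<in> S) (Pow {..<k})"
    by (auto simp: inj_on_def fun_eq_iff)
  then show ?thesis by (simp add: bool_vecs_eq card_image card_Pow)
qed

definition scale_fun :: "real \<Rightarrow> ('a \<Rightarrow> real) \<Rightarrow> ('a \<Rightarrow> real)" where
  "scale_fun c f = (\<lambda>x. c * f x)"

interpretation RF: vector_space "scale_fun :: real \<Rightarrow> ('a \<Rightarrow> real) \<Rightarrow> ('a \<Rightarrow> real)"
  by unfold_locales (auto simp: scale_fun_def fun_eq_iff algebra_simps)

lemma sum_apply: "(sum f A) x = (\<Sum>a\<in>A. f a x)" for f :: "'i \<Rightarrow> 'a \<Rightarrow> real"
  by (induction A rule: infinite_finite_induct) auto

(* Functions vanishing outside {0,1}^k: the space in which the hard function is chosen. *)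
definition supported :: "nat \<Rightarrow> ((nat \<Rightarrow> bool) \<Rightarrow> real) set" where
  "supported k = {w. \<forall>z. z \<notin> bool_vecs k \<longrightarrow> w z = 0}"

lemma subspace_supported: "RF.subspace (supported k)"
  by (auto simp: RF.subspace_def supported_def scale_fun_def)

definition point_indicator :: "'a \<Rightarrow> 'a \<Rightarrow> real" where
  "point_indicator z0 = (\<lambda>z. of_bool (z = z0))"

lemma independent_point_indicators:
  assumes "finite A"
  shows "RF.independent (point_indicator ` A)"
proof (rule RF.independent_if_scalars_zero)
  show "finite (point_indicator ` A)" using assms by simp
next
  fix c e assume sum0: "(\<Sum>x\<in>point_indicator ` A. scale_fun (c x) x) = 0"
    and e: "e \<in> point_indicator ` A"
  then obtain z0 where z0: "e = point_indicator z0" by auto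
  have "0 = (\<Sum>x\<in>point_indicator ` A. scale_fun (c x) x) z0" using sum0 by simp
  also have "\<dots> = (\<Sum>x\<in>point_indicator ` A. c x * x z0)" by (simp add: sum_apply scale_fun_def)
  also have "\<dots> = c e * e z0 + (\<Sum>x\<in>point_indicator ` A - {e}. c x * x z0)"
    by (rule sum.remove) (use assms e in auto)
  also have "(\<Sum>x\<in>point_indicator ` A - {e}. c x * x z0) = 0"
    using z0 by (intro sum.neutral) (auto simp: point_indicator_def)
  finally show "c e = 0" using z0 by (simp add: point_indicator_def)
qed

definition binary_value :: "nat \<Rightarrow> (nat \<Rightarrow> bool) \<Rightarrow> nat" where
  "binary_value k z = (\<Sum>i<k. of_bool (z i) * 2 ^ i)"

lemma binary_value_Suc: "binary_value (Suc k) z = binary_value k z + of_bool (z k) * 2 ^ k"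
  by (simp add: binary_value_def)

lemma bit_binary_value: "bit (binary_value k z) i \<longleftrightarrow> i < k \<and> z i"
proof -
  have "binary_value k z = horner_sum of_bool 2 (map z [0..<k])"
    by (simp add: binary_value_def horner_sum_eq_sum atLeast0LessThan)
  then show ?thesis by (auto simp add: bit_horner_sum_bit_iff)
qed

lemma inj_on_binary_value: "inj_on (binary_value k) (bool_vecs k)"
proof (rule inj_onI, rule ext)
  fix z z' i
  assume z: "z \<in> bool_vecs k" and z': "z' \<in> bool_vecs k"
    and eq: "binary_value k z = binary_value k z'"
  show "z i = z' i"
  proof (cases "i < k")
    case True
    then show ?thesis using eq bit_binary_value[of k _ i] by metis
  next
    case False
    then show ?thesis using z z' by (simp add: bool_vecs_def)
  qed
qed

(* Variable j of {0,1}^(2^k-1) lies in block floor_log (j+1); block b consists of the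
   2^b variables 2^b - 1, ..., 2^(b+1) - 2. *)
definition block_of :: "nat \<Rightarrow> nat" where
  "block_of j = floor_log (j + 1)"

lemma block_of_less: "j < 2 ^ k - 1 \<Longrightarrow> block_of j < k"
proof -
  assume "j < 2 ^ k - 1"
  moreover have "2 ^ block_of j \<le> j + 1" unfolding block_of_def by (rule floor_log_exp2_le) simp
  ultimately have "(2::nat) ^ block_of j < 2 ^ k" by linarith
  then show ?thesis by simp
qed

lemma block_of_eq: "2 ^ k - 1 \<le> j \<Longrightarrow> j < 2 ^ Suc k - 1 \<Longrightarrow> block_of j = k"
  unfolding block_of_def by (rule floor_log_eqI) auto

(* The block point of z switches on exactly the blocks b with z b; its Hamming weight is
   the binary value of z, since block b contributes 2^b. *)
definition block_point :: "nat \<Rightarrow> (nat \<Rightarrow> bool) \<Rightarrow> nat \<Rightarrow> bool" where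
  "block_point k z = (\<lambda>j. j < 2 ^ k - 1 \<and> z (block_of j))"

lemma block_point_in: "block_point k z \<in> bool_vecs (2 ^ k - 1)"
  by (simp add: block_point_def bool_vecs_def)

lemma hweight_block_point: "hweight (2 ^ k - 1) (block_point k z) = binary_value k z"
proof (induction k)
  case 0
  then show ?case by (simp add: hweight_def block_point_def binary_value_def)
next
  case (Suc k)
  define new where "new = {j::nat. 2 ^ k - 1 \<le> j \<and> j < 2 ^ Suc k - 1 \<and> z k}"
  have split: "{j. j < 2 ^ Suc k - 1 \<and> block_point (Suc k) z j}
      = {j. j < 2 ^ k - 1 \<and> block_point k z j} \<union> new"
  proof -
    have "(2::nat) ^ k - 1 \<le> 2 ^ Suc k - 1" by simp
    then show ?thesis
      using block_of_eq[of k] unfolding new_def block_point_def by (auto simp del: power_Suc)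
  qed
  have "card new = of_bool (z k) * 2 ^ k"
  proof (cases "z k")
    case True
    then have "new = {2 ^ k - 1..<2 ^ Suc k - 1}" unfolding new_def by auto
    moreover have "(2::nat) ^ Suc k - 1 - (2 ^ k - 1) = 2 ^ k"
      using one_le_power[of "2::nat" k] by simp
    ultimately show ?thesis using True by simp
  qed (simp add: new_def)
  moreover have "{j. j < 2 ^ k - 1 \<and> block_point k z j} \<inter> new = {}"
    unfolding new_def by auto
  moreover have "finite new" unfolding new_def by simp
  ultimately have "hweight (2 ^ Suc k - 1) (block_point (Suc k) z)
      = hweight (2 ^ k - 1) (block_point k z) + of_bool (z k) * 2 ^ k"
    unfolding hweight_def split by (simp add: card_Un_disjoint)
  then show ?case unfolding Suc.IH binary_value_Suc .
qed

(* For a choice sigma of auxiliary values, the reduced variables at z are z_0..z_(k-1),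
   the auxiliary values sigma(z)_0..sigma(z)_(m-1), and the constant 1 at index k+m. *)
definition reduced_var ::
    "nat \<Rightarrow> nat \<Rightarrow> ((nat \<Rightarrow> bool) \<Rightarrow> (nat \<Rightarrow> bool)) \<Rightarrow> (nat \<Rightarrow> bool) \<Rightarrow> nat \<Rightarrow> real" where
  "reduced_var k m \<sigma> z p = (if p = k + m then 1 else concat_vec k z (\<sigma> z) p)"

definition monomial ::
    "nat \<Rightarrow> nat \<Rightarrow> ((nat \<Rightarrow> bool) \<Rightarrow> (nat \<Rightarrow> bool)) \<Rightarrow> nat \<times> nat \<Rightarrow> (nat \<Rightarrow> bool) \<Rightarrow> real" where
  "monomial k m \<sigma> pq z =
     (if z \<in> bool_vecs k then reduced_var k m \<sigma> z (fst pq) * reduced_var k m \<sigma> z (snd pq) else 0)"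

definition monomials ::
    "nat \<Rightarrow> nat \<Rightarrow> ((nat \<Rightarrow> bool) \<Rightarrow> (nat \<Rightarrow> bool)) \<Rightarrow> ((nat \<Rightarrow> bool) \<Rightarrow> real) set" where
  "monomials k m \<sigma> = monomial k m \<sigma> ` ({..k + m} \<times> {..k + m})"

lemma card_monomials: "card (monomials k m \<sigma>) \<le> (k + m + 1) ^ 2"
proof -
  have "card (monomials k m \<sigma>) \<le> card ({..k + m} \<times> {..k + m})"
    unfolding monomials_def by (rule card_image_le) simp
  then show ?thesis by (simp add: card_cartesian_product power2_eq_square)
qed

lemma monomial_span_proper:
  assumes "(k + m + 1) ^ 2 < 2 ^ k"
  shows "\<not> supported k \<subseteq> RF.span (monomials k m \<sigma>)"
proof
  assume "supported k \<subseteq> RF.span (monomials k m \<sigma>)"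
  moreover have "point_indicator ` bool_vecs k \<subseteq> supported k"
    by (auto simp: supported_def point_indicator_def)
  ultimately have "card (point_indicator ` bool_vecs k) \<le> card (monomials k m \<sigma>)"
    using RF.independent_span_bound[OF _ independent_point_indicators[OF finite_bool_vecs]]
    by (simp add: monomials_def)
  moreover have "card (point_indicator ` bool_vecs k) = 2 ^ k"
    by (subst card_image) (auto simp: inj_on_def point_indicator_def fun_eq_iff card_bool_vecs)
  ultimately show False using card_monomials[of k m \<sigma>] assms by linarith
qed

definition var_index :: "nat \<Rightarrow> nat \<Rightarrow> nat" where
  "var_index k i = (if i < 2 ^ k - 1 then block_of i else i - (2 ^ k - 1) + k)"

lemma var_index_le: "i < 2 ^ k - 1 + m \<Longrightarrow> var_index k i < k + m"
  using block_of_less[of i k] by (auto simp: var_index_def)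

lemma concat_block_point:
  assumes "i < 2 ^ k - 1 + m"
  shows "concat_vec (2 ^ k - 1) (block_point k z) (\<sigma> z) i = reduced_var k m \<sigma> z (var_index k i)"
  using assms block_of_less[of i k]
  by (auto simp: var_index_def reduced_var_def concat_vec_def block_point_def)

lemma restricted_quadratic_in_span:
  "(\<lambda>z. if z \<in> bool_vecs k
        then quad_poly (2 ^ k - 1 + m) c a b (concat_vec (2 ^ k - 1) (block_point k z) (\<sigma> z)) else 0)
     \<in> RF.span (monomials k m \<sigma>)" (is "?g \<in> _")
proof -
  define n where "n = 2 ^ k - 1 + m"
  define K where "K = k + m"
  define x where "x z = concat_vec (2 ^ k - 1) (block_point k z) (\<sigma> z)" for z
  let ?v = "reduced_var k m \<sigma>" and ?mon = "monomial k m \<sigma>" and ?\<pi> = "var_index k"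
  have x: "x z i = ?v z (?\<pi> i)" if "i < n" for z i
    using concat_block_point that unfolding x_def n_def by blast
  have one: "?v z K = 1" for z by (simp add: reduced_var_def K_def)
  have "quad_poly n c a b (x z) = c * (?v z K * ?v z K) + (\<Sum>i<n. a i * (?v z (?\<pi> i) * ?v z K))
      + (\<Sum>i<n. \<Sum>j<n. b i j * (?v z (?\<pi> i) * ?v z (?\<pi> j)))" for z
    unfolding quad_poly_def one by (simp add: x mult.assoc)
  then have eq: "?g = scale_fun c (?mon (K, K)) + (\<Sum>i<n. scale_fun (a i) (?mon (?\<pi> i, K)))
      + (\<Sum>i<n. \<Sum>j<n. scale_fun (b i j) (?mon (?\<pi> i, ?\<pi> j)))"
    by (auto simp: fun_eq_iff sum_apply scale_fun_def monomial_def x_def n_def)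
  have mon: "?mon (p, q) \<in> RF.span (monomials k m \<sigma>)" if "p \<le> K" "q \<le> K" for p q
    using that by (intro RF.span_base) (simp add: monomials_def K_def)
  have index: "?\<pi> i \<le> K" if "i < n" for i
    using var_index_le[of i k m] that by (simp add: n_def K_def)
  show ?thesis
    unfolding eq by (intro RF.span_add RF.span_sum RF.span_scale mon) (auto simp: index)
qed

(* A quadratization of f with m auxiliary variables puts the values of f at block points
   into a monomial span, for sigma picking minimizing auxiliary values. *)
lemma quadratization_forces_span:
  assumes quad: "has_quadratization (2 ^ k - 1) m f"
    and \<phi>: "\<phi> \<in> supported k"
    and f\<phi>: "\<And>z. z \<in> bool_vecs k \<Longrightarrow> f (block_point k z) = \<phi> z"
  shows "\<exists>\<sigma>\<in>bool_vecs k \<rightarrow>\<^sub>E bool_vecs m. \<phi> \<in> RF.span (monomials k m \<sigma>)"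
proof -
  define n :: nat where "n = 2 ^ k - 1"
  obtain c a b where min: "\<And>x. x \<in> bool_vecs n \<Longrightarrow>
      f x = Min ((\<lambda>y. quad_poly (n + m) c a b (concat_vec n x y)) ` bool_vecs m)"
    using quad unfolding has_quadratization_def n_def by blast
  define G where "G z y = quad_poly (n + m) c a b (concat_vec n (block_point k z) y)" for z y
  have "\<exists>y\<in>bool_vecs m. G z y = \<phi> z" if z: "z \<in> bool_vecs k" for z
  proof -
    have "bool_vecs m \<noteq> {}" by (auto simp: bool_vecs_def)
    then have "Min (G z ` bool_vecs m) \<in> G z ` bool_vecs m"
      by (intro Min_in) (simp_all add: finite_bool_vecs)
    moreover have "\<phi> z = Min (G z ` bool_vecs m)"
      using min[OF block_point_in[of k z, folded n_def]] f\<phi>[OF z] by (simp add: G_def)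
    ultimately show ?thesis by auto
  qed
  then obtain \<sigma> where \<sigma>: "\<sigma> \<in> bool_vecs k \<rightarrow>\<^sub>E bool_vecs m"
      and G\<sigma>: "\<And>z. z \<in> bool_vecs k \<Longrightarrow> G z (\<sigma> z) = \<phi> z"
    by (metis (no_types, lifting) PiE_restrict restrict_PiE_iff restrict_apply')
  have eq: "\<phi> = (\<lambda>z. if z \<in> bool_vecs k
        then quad_poly (2 ^ k - 1 + m) c a b (concat_vec (2 ^ k - 1) (block_point k z) (\<sigma> z)) else 0)"
    using \<phi> G\<sigma> by (auto simp: fun_eq_iff supported_def G_def n_def)
  have "\<phi> \<in> RF.span (monomials k m \<sigma>)"
    unfolding eq by (rule restricted_quadratic_in_span)
  with \<sigma> show ?thesis by blast
qed

(* Only finitely many pairs (m, sigma) satisfy (k+m+1)^2 < 2^k, so some supported function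
   avoids all the corresponding (proper) monomial spans. *)
lemma hard_coefficients_exist:
  "\<exists>\<phi>\<in>supported k. \<forall>m. (k + m + 1) ^ 2 < 2 ^ k \<longrightarrow>
     (\<forall>\<sigma>\<in>bool_vecs k \<rightarrow>\<^sub>E bool_vecs m. \<phi> \<notin> RF.span (monomials k m \<sigma>))"
proof -
  define I where "I = (SIGMA m:{m. (k + m + 1) ^ 2 < 2 ^ k}. bool_vecs k \<rightarrow>\<^sub>E bool_vecs m)"
  have "{m. (k + m + 1) ^ 2 < 2 ^ k} \<subseteq> {..<2 ^ k}"
    by (auto simp: power2_eq_square)
  then have "finite I"
    unfolding I_def by (intro finite_SigmaI finite_PiE finite_bool_vecs) (auto intro: finite_subset)
  moreover have "\<not> supported k \<subseteq> RF.span (monomials k (fst i) (snd i))" if "i \<in> I" for i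
    using that monomial_span_proper[of k "fst i"] unfolding I_def by auto
  ultimately have "\<exists>\<phi>\<in>supported k. \<forall>i\<in>I. \<phi> \<notin> RF.span (monomials k (fst i) (snd i))"
    by (intro RF.avoid_finite_union_of_subspaces subspace_supported infinite_UNIV_char_0) auto
  then show ?thesis unfolding I_def by fastforce
qed

(* The hard symmetric function: its value at weight w is phi of the binary digits of w. *)
lemma symmetric_function_needing_many_aux:
  "\<exists>f. symmetric_pbf (2 ^ k - 1) f \<and>
     (\<forall>m. has_quadratization (2 ^ k - 1) m f \<longrightarrow> 2 ^ k \<le> (k + m + 1) ^ 2)"
proof -
  obtain \<phi> where \<phi>: "\<phi> \<in> supported k" and hard: "\<And>m \<sigma>. (k + m + 1) ^ 2 < 2 ^ k \<Longrightarrow>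
      \<sigma> \<in> bool_vecs k \<rightarrow>\<^sub>E bool_vecs m \<Longrightarrow> \<phi> \<notin> RF.span (monomials k m \<sigma>)"
    using hard_coefficients_exist[of k] by blast
  define f where "f x = \<phi> (the_inv_into (bool_vecs k) (binary_value k) (hweight (2 ^ k - 1) x))" for x
  have "symmetric_pbf (2 ^ k - 1) f" unfolding symmetric_pbf_def f_def by simp
  moreover have "f (block_point k z) = \<phi> z" if "z \<in> bool_vecs k" for z
    unfolding f_def hweight_block_point using the_inv_into_f_f[OF inj_on_binary_value that] by simp
  then have "2 ^ k \<le> (k + m + 1) ^ 2" if "has_quadratization (2 ^ k - 1) m f" for m
    using quadratization_forces_span[OF that \<phi>] hard by (meson not_le)
  ultimately show ?thesis by blast
qed

(* The counting condition 2^k <= (k+m+1)^2 forces m >= sqrt(2^k - 1) / 2 once k >= 10. *)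
lemma four_square_le_exp: "10 \<le> k \<Longrightarrow> 4 * (k + 1) ^ 2 \<le> (2::nat) ^ k"
proof (induction k rule: dec_induct)
  case base
  then show ?case by simp
next
  case (step k)
  have "10 * 10 \<le> k * k" using step(1) by (intro mult_le_mono) auto
  then have "4 * (Suc k + 1) ^ 2 \<le> 2 * (4 * (k + 1) ^ 2)"
    by (simp add: power2_eq_square algebra_simps)
  also have "\<dots> \<le> 2 * 2 ^ k" using step.IH by simp
  finally show ?case by simp
qed

lemma aux_count_lower_bound:
  assumes k: "10 \<le> k" and m: "2 ^ k \<le> (k + m + 1) ^ 2"
  shows "1 / 2 * sqrt (real (2 ^ k - 1)) \<le> real m"
proof -
  have "sqrt (2 ^ k) \<le> real (k + m + 1)"
  proof (rule real_le_lsqrt)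
    show "2 ^ k \<le> real (k + m + 1) ^ 2"
      using m by (metis of_nat_le_iff of_nat_numeral of_nat_power)
  qed simp
  then have upper: "sqrt (2 ^ k) \<le> real k + real m + 1" by simp
  have "real (4 * (k + 1) ^ 2) \<le> real ((2::nat) ^ k)"
    using four_square_le_exp[OF k] by (simp only: of_nat_le_iff)
  then have "(2 * real (k + 1)) ^ 2 \<le> 2 ^ k"
    by (simp add: power2_eq_square algebra_simps)
  then have "2 * real k + 2 \<le> sqrt (2 ^ k)" using real_le_rsqrt by force
  moreover have "sqrt (real (2 ^ k - 1)) \<le> sqrt (2 ^ k)" by simp
  ultimately show ?thesis using upper by linarith
qed

theorem theorem7:
  shows "\<exists>C::real. C > 0 \<and>
    (\<forall>N::nat. \<exists>n\<ge>N. \<exists>f. symmetric_pbf n f \<and>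
        (\<forall>m. has_quadratization n m f \<longrightarrow> real m \<ge> C * sqrt (real n)))"
proof (intro exI[of _ "1/2"] conjI allI)
  fix N :: nat
  define k where "k = N + 10"
  have "N \<le> 2 ^ k - 1"
    using less_exp[of k] unfolding k_def by linarith
  moreover obtain f where "symmetric_pbf (2 ^ k - 1) f"
    and needs: "\<And>m. has_quadratization (2 ^ k - 1) m f \<Longrightarrow> 2 ^ k \<le> (k + m + 1) ^ 2"
    using symmetric_function_needing_many_aux by blast
  moreover have "real m \<ge> 1/2 * sqrt (real (2 ^ k - 1))" if "has_quadratization (2 ^ k - 1) m f" for m
    using aux_count_lower_bound[OF _ needs[OF that]] unfolding k_def by simp
  ultimately show "\<exists>n\<ge>N. \<exists>f. symmetric_pbf n f \<and>
      (\<forall>m. has_quadratization n m f \<longrightarrow> real m \<ge> 1/2 * sqrt (real n))"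
    by blast
qed simp

end
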